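(* Let $1\le\tau_1<\tau_2<\dots<\tau_m$ be fixed thresholds. Consider instances with two candidates $P,Q$, and any deterministic mechanism which selects a winner using only the threshold information described in the context. Then the worst-case distortion of the mechanism is at least $$\max\Big\{\tau_1,\ \frac{\tau_m+2}{\tau_m},\ \max_{1\le l\le m-1}\frac{\tau_l\tau_{l+1}+2\tau_{l+1}-1}{\tau_l\tau_{l+1}+1}\Big\}.$$ (Equivalently, with the conventions $\tau_0=1/\tau_1$ and $\tau_{m+1}=\infty$, the bound is $\max_{0\le l\le m}\frac{\tau_l\tau_{l+1}+2\tau_{l+1}-1}{\tau_l\tau_{l+1}+1}$, the $l=m$ term being interpreted as its limit $(\tau_m+2)/\tau_m$.)
   Context: Voters $N=\{1,\dots,n\}$ and a finite set of candidates $\mathcal C$ are points of an arbitrary (unknown) metric space $(X,d)$. Voter $i$ prefers $P$ to $Q$ only if $d(i,P)\le d(i,Q)$; the strength of this preference is $\alpha_i^{PQ}=d(i,Q)/d(i,P)\ge1$. $SC(Y)=\sum_{i\in N}d(i,Y)$. Distortion of a winner $P_I$ on instance $I=(N,\mathcal C,d)$ is $SC(P_I)/\min_{Z\in\mathcal C}SC(Z)$; the distortion of a mechanism is the supremum over instances. Threshold information: given thresholds $1\le\tau_1<\dots<\tau_m$ and setting $\tau_{m+1}=\infty$, for each voter $i$ and each pair $P,Q$, if $i$'s preference strength between $P$ and $Q$ is at least $\tau_1$ the mechanism learns which of the two $i$ prefers and the unique $l\in\{1,\dots,m\}$ with $\tau_l\le$ strength $<\tau_{l+1}$; if the strength is below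 $\tau_1$ the mechanism learns nothing about $i$'s preference between $P$ and $Q$. Thus it learns the sets $A_l=\{i: d(i,P)\le d(i,Q),\ \tau_l\le\alpha_i^{PQ}<\tau_{l+1}\}$, $B_l=\{j: d(j,Q)\le d(j,P),\ \tau_l\le\alpha_j^{QP}<\tau_{l+1}\}$, and the set $C$ of remaining voters. *)

theory Defs
  imports Complex_Main "HOL-Library.Extended_Real"
begin

text \<open>Points of an instance: voters 1..n and the two candidates P, Q.
  An instance is a (pseudo)metric on these labels; distinct voters may share a location.\<close>
datatype pt = Voter nat | CandP | CandQ

definition pts :: "nat \<Rightarrow> pt set" where
  "pts n = Voter ` {1..n} \<union> {CandP, CandQ}"

definition is_instance :: "nat \<Rightarrow> (pt \<Rightarrow> pt \<Rightarrow> real) \<Rightarrow> bool" where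
  "is_instance n d \<longleftrightarrow>
     (\<forall>x\<in>pts n. d x x = 0) \<and>
     (\<forall>x\<in>pts n. \<forall>y\<in>pts n. 0 \<le> d x y \<and> d x y = d y x) \<and>
     (\<forall>x\<in>pts n. \<forall>y\<in>pts n. \<forall>z\<in>pts n. d x z \<le> d x y + d y z)"

definition strength :: "real \<Rightarrow> real \<Rightarrow> ereal" where
  "strength a b = (if a = 0 then (if b = 0 then 1 else \<infinity>) else ereal (b / a))"

definition in_level :: "(nat \<Rightarrow> real) \<Rightarrow> nat \<Rightarrow> real \<Rightarrow> real \<Rightarrow> nat \<Rightarrow> bool" where
  "in_level \<tau> m a b l \<longleftrightarrow> a \<le> b \<and> ereal (\<tau> l) \<le> strength a b \<and>
     (if l < m then strength a b < ereal (\<tau> (Suc l)) else True)"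

definition A_set :: "(nat \<Rightarrow> real) \<Rightarrow> nat \<Rightarrow> nat \<Rightarrow> (pt \<Rightarrow> pt \<Rightarrow> real) \<Rightarrow> nat \<Rightarrow> nat set" where
  "A_set \<tau> m n d l = (if l \<in> {1..m} then
     {i\<in>{1..n}. in_level \<tau> m (d (Voter i) CandP) (d (Voter i) CandQ) l} else {})"

definition B_set :: "(nat \<Rightarrow> real) \<Rightarrow> nat \<Rightarrow> nat \<Rightarrow> (pt \<Rightarrow> pt \<Rightarrow> real) \<Rightarrow> nat \<Rightarrow> nat set" where
  "B_set \<tau> m n d l = (if l \<in> {1..m} then
     {i\<in>{1..n}. in_level \<tau> m (d (Voter i) CandQ) (d (Voter i) CandP) l} else {})"

text \<open>The information available to the mechanism: n, the sets A_l and B_l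
  (C is determined as the remaining voters).\<close>
type_synonym info = "nat \<times> (nat \<Rightarrow> nat set) \<times> (nat \<Rightarrow> nat set)"

definition threshold_info :: "(nat \<Rightarrow> real) \<Rightarrow> nat \<Rightarrow> nat \<Rightarrow> (pt \<Rightarrow> pt \<Rightarrow> real) \<Rightarrow> info" where
  "threshold_info \<tau> m n d = (n, A_set \<tau> m n d, B_set \<tau> m n d)"

definition SC :: "nat \<Rightarrow> (pt \<Rightarrow> pt \<Rightarrow> real) \<Rightarrow> pt \<Rightarrow> real" where
  "SC n d Y = (\<Sum>i\<in>{1..n}. d (Voter i) Y)"

definition ratio :: "real \<Rightarrow> real \<Rightarrow> ereal" where
  "ratio x y = (if y = 0 then (if x = 0 then 1 else \<infinity>) else ereal (x / y))"

definition winner :: "bool \<Rightarrow> pt" where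
  "winner b = (if b then CandP else CandQ)"

definition inst_distortion :: "nat \<Rightarrow> (pt \<Rightarrow> pt \<Rightarrow> real) \<Rightarrow> bool \<Rightarrow> ereal" where
  "inst_distortion n d w = ratio (SC n d (winner w)) (min (SC n d CandP) (SC n d CandQ))"

definition mech_distortion :: "(nat \<Rightarrow> real) \<Rightarrow> nat \<Rightarrow> (info \<Rightarrow> bool) \<Rightarrow> ereal" where
  "mech_distortion \<tau> m f =
     (SUP p \<in> {(n, d). is_instance n d}.
        inst_distortion (fst p) (snd p) (f (threshold_info \<tau> m (fst p) (snd p))))"

end

theory Submission
  imports Defs
begin

text \<open>All instances used live on a line, with P at 0 and Q at D. Reflecting the line
  (\<open>x \<mapsto> D - x\<close>) exchanges P and Q. If, after reversing the order of the voters, every voter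
  of the reflected instance reports exactly what the corresponding voter of the original one
  reports, the mechanism receives the same input on both and so elects P on the original or
  Q on the reflection; either way its distortion is SC(P)/SC(Q) of the original. Three
  families realise the three terms: a single voter whose preference is too weak to be
  reported (ratio s < \<open>\<tau>\<^sub>1\<close>); a voter at Q together with a voter of strength
  s > \<open>\<tau>\<^sub>m\<close>, both seen only in the top level (ratio (s + 2)/s); and two opposite voters
  with strengths t < s in the same interval \<open>[\<tau>\<^sub>l, \<tau>\<^sub>l\<^sub>+\<^sub>1)\<close> (ratio
  (ts + 2s - 1)/(ts + 1)). Letting the strengths tend to the thresholds gives the bound.\<close>

fun line_coord :: "real \<Rightarrow> (nat \<Rightarrow> real) \<Rightarrow> pt \<Rightarrow> real" where
  "line_coord D x (Voter i) = x i"
| "line_coord D x CandP = 0"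
| "line_coord D x CandQ = D"

definition line_metric :: "real \<Rightarrow> (nat \<Rightarrow> real) \<Rightarrow> pt \<Rightarrow> pt \<Rightarrow> real" where
  "line_metric D x p q = \<bar>line_coord D x p - line_coord D x q\<bar>"

definition mirror :: "nat \<Rightarrow> real \<Rightarrow> (nat \<Rightarrow> real) \<Rightarrow> nat \<Rightarrow> real" where
  "mirror n D x i = D - x (Suc n - i)"

lemma is_instance_line_metric: "is_instance n (line_metric D x)"
  unfolding is_instance_def line_metric_def by auto

lemma line_metric_voter [simp]:
  "line_metric D x (Voter i) CandP = \<bar>x i\<bar>"
  "line_metric D x (Voter i) CandQ = \<bar>D - x i\<bar>"
  by (simp_all add: line_metric_def abs_minus_commute)

lemma bij_betw_reverse: "bij_betw (\<lambda>i. Suc n - i) {1..n} {1..n}"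
  by (rule bij_betw_byWitness[where f' = "\<lambda>i. Suc n - i"]) auto

lemma SC_mirror:
  "SC n (line_metric D (mirror n D x)) CandP = SC n (line_metric D x) CandQ"
  "SC n (line_metric D (mirror n D x)) CandQ = SC n (line_metric D x) CandP"
  unfolding SC_def line_metric_voter mirror_def
  using sum.reindex_bij_betw[OF bij_betw_reverse, of "\<lambda>j. \<bar>D - x j\<bar>" n]
    sum.reindex_bij_betw[OF bij_betw_reverse, of "\<lambda>j. \<bar>x j\<bar>" n]
  by simp_all

lemma inst_distortion_mirror:
  "inst_distortion n (line_metric D (mirror n D x)) False = inst_distortion n (line_metric D x) True"
  by (simp add: inst_distortion_def winner_def SC_mirror min.commute)

lemma inst_distortion_le_mech_distortion:
  "is_instance n d \<Longrightarrow> inst_distortion n d (f (threshold_info \<tau> m n d)) \<le> mech_distortion \<tau> m f"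
  unfolding mech_distortion_def by (rule SUP_upper2[where i = "(n, d)"]) auto

lemma threshold_info_eqI:
  assumes "\<And>i l. i \<in> {1..n} \<Longrightarrow> l \<in> {1..m} \<Longrightarrow>
      in_level \<tau> m (d (Voter i) CandP) (d (Voter i) CandQ) l
    = in_level \<tau> m (d' (Voter i) CandP) (d' (Voter i) CandQ) l"
    and "\<And>i l. i \<in> {1..n} \<Longrightarrow> l \<in> {1..m} \<Longrightarrow>
      in_level \<tau> m (d (Voter i) CandQ) (d (Voter i) CandP) l
    = in_level \<tau> m (d' (Voter i) CandQ) (d' (Voter i) CandP) l"
  shows "threshold_info \<tau> m n d = threshold_info \<tau> m n d'"
  using assms by (auto simp: threshold_info_def A_set_def B_set_def fun_eq_iff)

lemma mech_distortion_ge_mirror: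
  assumes "\<And>i l. i \<in> {1..n} \<Longrightarrow> l \<in> {1..m} \<Longrightarrow>
      in_level \<tau> m (\<bar>x i\<bar>) (\<bar>D - x i\<bar>) l
    = in_level \<tau> m (\<bar>D - x (Suc n - i)\<bar>) (\<bar>x (Suc n - i)\<bar>) l"
    and "\<And>i l. i \<in> {1..n} \<Longrightarrow> l \<in> {1..m} \<Longrightarrow>
      in_level \<tau> m (\<bar>D - x i\<bar>) (\<bar>x i\<bar>) l
    = in_level \<tau> m (\<bar>x (Suc n - i)\<bar>) (\<bar>D - x (Suc n - i)\<bar>) l"
  shows "inst_distortion n (line_metric D x) True \<le> mech_distortion \<tau> m f"
proof -
  let ?d = "line_metric D x" and ?d' = "line_metric D (mirror n D x)"
  have info: "threshold_info \<tau> m n ?d = threshold_info \<tau> m n ?d'"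
    by (rule threshold_info_eqI) (auto simp: mirror_def assms abs_minus_commute)
  show ?thesis
  proof (cases "f (threshold_info \<tau> m n ?d)")
    case True
    then show ?thesis
      using inst_distortion_le_mech_distortion[OF is_instance_line_metric, of n D x f \<tau> m] by simp
  next
    case False
    then show ?thesis
      using inst_distortion_le_mech_distortion[OF is_instance_line_metric, of n D "mirror n D x" f \<tau> m]
      by (simp add: info inst_distortion_mirror)
  qed
qed

lemma mech_distortion_ge_mirror_two_voters:
  assumes "\<And>l. l \<in> {1..m} \<Longrightarrow>
      in_level \<tau> m (\<bar>x 1\<bar>) (\<bar>D - x 1\<bar>) l = in_level \<tau> m (\<bar>D - x 2\<bar>) (\<bar>x 2\<bar>) l"
    and "\<And>l. l \<in> {1..m} \<Longrightarrow>
      in_level \<tau> m (\<bar>D - x 1\<bar>) (\<bar>x 1\<bar>) l = in_level \<tau> m (\<bar>x 2\<bar>) (\<bar>D - x 2\<bar>) l"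
  shows "inst_distortion 2 (line_metric D x) True \<le> mech_distortion \<tau> m f"
proof (rule mech_distortion_ge_mirror)
  fix i l assume "i \<in> {1..2::nat}" and l: "l \<in> {1..m}"
  then have "i = 1 \<or> i = 2" by auto
  then show "in_level \<tau> m (\<bar>x i\<bar>) (\<bar>D - x i\<bar>) l
      = in_level \<tau> m (\<bar>D - x (Suc 2 - i)\<bar>) (\<bar>x (Suc 2 - i)\<bar>) l"
    and "in_level \<tau> m (\<bar>D - x i\<bar>) (\<bar>x i\<bar>) l
      = in_level \<tau> m (\<bar>x (Suc 2 - i)\<bar>) (\<bar>D - x (Suc 2 - i)\<bar>) l"
    using assms[OF l] by auto
qed

lemma in_level_cong:
  assumes "a < b" "a' < b'" "l \<in> {1..m}"
    and "\<And>k. k \<in> {1..m} \<Longrightarrow> ereal (\<tau> k) \<le> strength a b \<longleftrightarrow> ereal (\<tau> k) \<le> strength a' b'"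
  shows "in_level \<tau> m a b l = in_level \<tau> m a' b' l"
    and "in_level \<tau> m b a l = in_level \<tau> m b' a' l"
proof -
  have "strength a b < ereal (\<tau> (Suc l)) \<longleftrightarrow> strength a' b' < ereal (\<tau> (Suc l))" if "l < m"
  proof -
    have "Suc l \<in> {1..m}" using that by simp
    from assms(4)[OF this] show ?thesis by (simp add: not_le[symmetric])
  qed
  then show "in_level \<tau> m a b l = in_level \<tau> m a' b' l"
    using assms by (simp add: in_level_def)
  show "in_level \<tau> m b a l = in_level \<tau> m b' a' l"
    using assms(1,2) by (simp add: in_level_def)
qed

lemma inst_distortion_True:
  assumes "0 < SC n d CandQ" "SC n d CandQ \<le> SC n d CandP"
  shows "inst_distortion n d True = ereal (SC n d CandP / SC n d CandQ)"
  using assms by (simp add: inst_distortion_def winner_def ratio_def min_def)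

lemma SC_two: "SC 2 d Y = d (Voter 1) Y + d (Voter 2) Y"
  by (simp add: SC_def numeral_2_eq_2)

lemma ereal_le_of_tendsto_at_right:
  fixes g :: "real \<Rightarrow> real"
  assumes "(g \<longlongrightarrow> L) (at_right 0)" "0 < \<delta>"
    and "\<And>e. 0 < e \<Longrightarrow> e < \<delta> \<Longrightarrow> ereal (g e) \<le> M"
  shows "ereal L \<le> M"
proof (rule tendsto_upperbound)
  show "((\<lambda>e. ereal (g e)) \<longlongrightarrow> ereal L) (at_right 0)"
    using assms(1) by (rule tendsto_ereal)
  show "\<forall>\<^sub>F e in at_right 0. ereal (g e) \<le> M"
    unfolding eventually_at_right_field using assms(2,3) by blast
qed simp

context
  fixes m :: nat and \<tau> :: "nat \<Rightarrow> real"
  assumes m_pos: "1 \<le> m"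
    and tau_1: "1 \<le> \<tau> 1"
    and tau_strict: "\<forall>l\<in>{1..<m}. \<tau> l < \<tau> (Suc l)"
begin

lemma tau_mono:
  assumes "1 \<le> i" "i \<le> j" "j \<le> m"
  shows "\<tau> i \<le> \<tau> j"
  by (rule lift_Suc_mono_le_ivl[where N = "{1..<m}"]) (use assms tau_strict in \<open>auto intro: less_imp_le\<close>)

lemma tau_ge_1: "l \<in> {1..m} \<Longrightarrow> 1 \<le> \<tau> l"
  using tau_mono[of 1 l] tau_1 by auto

lemma tau_le_iff_same_interval:
  assumes "l \<in> {1..<m}" "k \<in> {1..m}"
    and "\<tau> l \<le> t" "t < \<tau> (Suc l)" "\<tau> l \<le> s" "s < \<tau> (Suc l)"
  shows "\<tau> k \<le> t \<longleftrightarrow> \<tau> k \<le> s"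
proof (cases "k \<le> l")
  case True
  then have "\<tau> k \<le> \<tau> l" using assms(1,2) by (intro tau_mono) auto
  then show ?thesis using assms by linarith
next
  case False
  then have "\<tau> (Suc l) \<le> \<tau> k" using assms(1,2) by (intro tau_mono) auto
  then show ?thesis using assms by linarith
qed

lemma distortion_ge_below_first_threshold:
  assumes "1 < s" "s < \<tau> 1"
  shows "ereal s \<le> mech_distortion \<tau> m f"
proof -
  let ?x = "\<lambda>_::nat. s"
  have silent: "\<not> in_level \<tau> m 1 s l" "\<not> in_level \<tau> m s 1 l" if "l \<in> {1..m}" for l
    using tau_mono[of 1 l] that assms by (auto simp: in_level_def strength_def)
  have "SC 1 (line_metric (1 + s) ?x) CandP = s" "SC 1 (line_metric (1 + s) ?x) CandQ = 1"
    using assms by (simp_all add: SC_def)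
  then have "ereal s = inst_distortion 1 (line_metric (1 + s) ?x) True"
    using assms by (simp add: inst_distortion_True)
  also have "\<dots> \<le> mech_distortion \<tau> m f"
    using silent assms by (intro mech_distortion_ge_mirror) auto
  finally show ?thesis .
qed

lemma distortion_ge_above_last_threshold:
  assumes "\<tau> m < s"
  shows "ereal ((s + 2) / s) \<le> mech_distortion \<tau> m f"
proof -
  have s: "1 < s" using tau_ge_1[of m] m_pos assms by auto
  define x where "x = (\<lambda>i::nat. if i = 1 then 1 else 1 + s)"
  have strong: "in_level \<tau> m 1 s l = in_level \<tau> m 0 (1 + s) l"
    and reverse: "in_level \<tau> m s 1 l = in_level \<tau> m (1 + s) 0 l" if "l \<in> {1..m}" for l
  proof -
    have "ereal (\<tau> k) \<le> strength 1 s \<longleftrightarrow> ereal (\<tau> k) \<le> strength 0 (1 + s)" if "k \<in> {1..m}" for k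
      using tau_mono[of k m] that s assms by (simp add: strength_def)
    then show "in_level \<tau> m 1 s l = in_level \<tau> m 0 (1 + s) l"
      and "in_level \<tau> m s 1 l = in_level \<tau> m (1 + s) 0 l"
      using in_level_cong[of 1 s 0 "1 + s" l m \<tau>] s \<open>l \<in> {1..m}\<close> by auto
  qed
  have dist: "\<bar>x 1\<bar> = 1" "\<bar>1 + s - x 1\<bar> = s" "\<bar>1 + s - x 2\<bar> = 0" "\<bar>x 2\<bar> = 1 + s"
    using s by (simp_all add: x_def)
  have "SC 2 (line_metric (1 + s) x) CandP = s + 2" "SC 2 (line_metric (1 + s) x) CandQ = s"
    using dist by (simp_all add: SC_two)
  then have "ereal ((s + 2) / s) = inst_distortion 2 (line_metric (1 + s) x) True"
    using s by (simp add: inst_distortion_True)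
  also have "\<dots> \<le> mech_distortion \<tau> m f"
    by (rule mech_distortion_ge_mirror_two_voters) (simp_all only: dist strong reverse)
  finally show ?thesis .
qed

text \<open>The paper's positions 1/(t + 1) and s/(s - 1) on the unit segment, scaled by
  \<open>(t + 1) (s - 1)\<close>.\<close>
lemma distortion_ge_within_threshold_interval:
  assumes l: "l \<in> {1..<m}"
    and t: "\<tau> l \<le> t" "1 < t" and ts: "t < s" and s: "s < \<tau> (Suc l)"
  shows "ereal ((t * s + 2 * s - 1) / (t * s + 1)) \<le> mech_distortion \<tau> m f"
proof -
  define D where "D = (t + 1) * (s - 1)"
  define x where "x = (\<lambda>i::nat. if i = 1 then s - 1 else s * (t + 1))"
  have dist: "\<bar>x 1\<bar> = s - 1" "\<bar>D - x 1\<bar> = t * (s - 1)" "\<bar>D - x 2\<bar> = t + 1" "\<bar>x 2\<bar> = s * (t + 1)"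
    using t ts by (auto simp: D_def x_def algebra_simps)
  have strong: "in_level \<tau> m (s - 1) (t * (s - 1)) l' = in_level \<tau> m (t + 1) (s * (t + 1)) l'"
    and reverse: "in_level \<tau> m (t * (s - 1)) (s - 1) l' = in_level \<tau> m (s * (t + 1)) (t + 1) l'"
    if "l' \<in> {1..m}" for l'
  proof -
    have "strength (s - 1) (t * (s - 1)) = ereal t" "strength (t + 1) (s * (t + 1)) = ereal s"
      using t ts by (simp_all add: strength_def)
    moreover have "\<tau> k \<le> t \<longleftrightarrow> \<tau> k \<le> s" if "k \<in> {1..m}" for k
      by (rule tau_le_iff_same_interval[OF l that]) (use t ts s in linarith)+
    ultimately show "in_level \<tau> m (s - 1) (t * (s - 1)) l' = in_level \<tau> m (t + 1) (s * (t + 1)) l'"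
      and "in_level \<tau> m (t * (s - 1)) (s - 1) l' = in_level \<tau> m (s * (t + 1)) (t + 1) l'"
      using in_level_cong[of "s - 1" "t * (s - 1)" "t + 1" "s * (t + 1)" l' m \<tau>] t ts that
      by auto
  qed
  have SC: "SC 2 (line_metric D x) CandP = t * s + 2 * s - 1" "SC 2 (line_metric D x) CandQ = t * s + 1"
    using dist by (simp_all add: SC_two algebra_simps)
  have "0 < t * s + 1" "t * s + 1 \<le> t * s + 2 * s - 1"
    using t ts by (simp_all add: add_pos_pos)
  then have "ereal ((t * s + 2 * s - 1) / (t * s + 1)) = inst_distortion 2 (line_metric D x) True"
    by (simp add: inst_distortion_True SC)
  also have "\<dots> \<le> mech_distortion \<tau> m f"
    by (rule mech_distortion_ge_mirror_two_voters) (simp_all only: dist strong reverse)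
  finally show ?thesis .
qed

lemma last_threshold_bound_le_mech_distortion:
  "ereal ((\<tau> m + 2) / \<tau> m) \<le> mech_distortion \<tau> m f"
proof (rule ereal_le_of_tendsto_at_right)
  have "1 \<le> \<tau> m" using tau_ge_1[of m] m_pos by auto
  then have "((\<lambda>e. (\<tau> m + e + 2) / (\<tau> m + e)) \<longlongrightarrow> (\<tau> m + 0 + 2) / (\<tau> m + 0)) (at_right 0)"
    by (intro tendsto_intros) auto
  then show "((\<lambda>e. (\<tau> m + e + 2) / (\<tau> m + e)) \<longlongrightarrow> (\<tau> m + 2) / \<tau> m) (at_right 0)"
    by simp
  show "ereal ((\<tau> m + e + 2) / (\<tau> m + e)) \<le> mech_distortion \<tau> m f" if "0 < e" for e
    using distortion_ge_above_last_threshold[of "\<tau> m + e"] that by (simp add: add_ac)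
qed (rule zero_less_one)

lemma first_threshold_le_mech_distortion: "ereal (\<tau> 1) \<le> mech_distortion \<tau> m f"
proof (cases "\<tau> 1 = 1")
  case True
  have "ereal (\<tau> 1) \<le> ereal ((\<tau> m + 2) / \<tau> m)"
    using True tau_ge_1[of m] m_pos by simp
  then show ?thesis
    using last_threshold_bound_le_mech_distortion[of f] by (rule order_trans)
next
  case False
  show ?thesis
  proof (rule ereal_le_of_tendsto_at_right)
    show "((\<lambda>e. \<tau> 1 - e) \<longlongrightarrow> \<tau> 1) (at_right 0)"
      by (intro tendsto_eq_intros) auto
    show "0 < \<tau> 1 - 1" using False tau_1 by simp
    show "ereal (\<tau> 1 - e) \<le> mech_distortion \<tau> m f" if "0 < e" "e < \<tau> 1 - 1" for e
      using that by (intro distortion_ge_below_first_threshold) auto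
  qed
qed

lemma interval_bound_le_mech_distortion:
  assumes l: "l \<in> {1..<m}"
  shows "ereal ((\<tau> l * \<tau> (Suc l) + 2 * \<tau> (Suc l) - 1) / (\<tau> l * \<tau> (Suc l) + 1))
    \<le> mech_distortion \<tau> m f"
proof -
  define a where "a = \<tau> l"
  define b where "b = \<tau> (Suc l)"
  have ab: "a < b" "1 \<le> a" unfolding a_def b_def using tau_strict tau_ge_1[of l] l by auto
  let ?g = "\<lambda>e. ((a + e) * (b - e) + 2 * (b - e) - 1) / ((a + e) * (b - e) + 1)"
  have "ereal ((a * b + 2 * b - 1) / (a * b + 1)) \<le> mech_distortion \<tau> m f"
  proof (rule ereal_le_of_tendsto_at_right)
    have "(?g \<longlongrightarrow> ((a + 0) * (b - 0) + 2 * (b - 0) - 1) / ((a + 0) * (b - 0) + 1)) (at_right 0)"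
    proof (intro tendsto_intros)
      have "0 < a * b" using ab by simp
      then show "(a + 0) * (b - 0) + 1 \<noteq> 0" by simp
    qed
    then show "(?g \<longlongrightarrow> (a * b + 2 * b - 1) / (a * b + 1)) (at_right 0)"
      by simp
    show "0 < (b - a) / 2" using ab by simp
    show "ereal (?g e) \<le> mech_distortion \<tau> m f" if "0 < e" "e < (b - a) / 2" for e
      by (rule distortion_ge_within_threshold_interval[OF l]) (use that ab in \<open>auto simp: a_def b_def\<close>)
  qed
  then show ?thesis unfolding a_def b_def .
qed

end

theorem mainTheorem2:
  fixes m :: nat and \<tau> :: "nat \<Rightarrow> real" and f :: "info \<Rightarrow> bool"
  assumes "1 \<le> m"
    and "1 \<le> \<tau> 1"
    and "\<forall>l\<in>{1..<m}. \<tau> l < \<tau> (Suc l)"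
  shows "ereal (Max ({\<tau> 1, (\<tau> m + 2) / \<tau> m} \<union>
           (\<lambda>l. (\<tau> l * \<tau> (Suc l) + 2 * \<tau> (Suc l) - 1) / (\<tau> l * \<tau> (Suc l) + 1)) ` {1..<m}))
         \<le> mech_distortion \<tau> m f"
proof -
  let ?S = "{\<tau> 1, (\<tau> m + 2) / \<tau> m} \<union>
           (\<lambda>l. (\<tau> l * \<tau> (Suc l) + 2 * \<tau> (Suc l) - 1) / (\<tau> l * \<tau> (Suc l) + 1)) ` {1..<m}"
  have "Max ?S \<in> ?S" by (rule Max_in) auto
  moreover have "\<forall>r\<in>?S. ereal r \<le> mech_distortion \<tau> m f"
    using first_threshold_le_mech_distortion[OF assms] last_threshold_bound_le_mech_distortion[OF assms]
      interval_bound_le_mech_distortion[OF assms] by blast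
  ultimately show ?thesis by blast
qed

end
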